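(* For every integer $\chi\geq 6$ and every positive integer $N$, there exists a family $\mathcal{F}$ of at least $N$ pairwise non-isomorphic finite graphs such that every $G\in\mathcal{F}$ has chromatic number $\chi$ and no frozen vertices, and $\mathcal{C}_\chi(G)\cong\mathcal{C}_\chi(G')$ for all $G,G'\in\mathcal{F}$.
   Context: All graphs are finite and simple. For a positive integer $k$, a (proper) $k$-colouring of $G$ is a map $c:V(G)\to\{1,\dots,k\}$ with $c(u)\neq c(v)$ for every edge $uv$; $\chi(G)$ is the chromatic number. The $k$-recolouring graph $\mathcal{C}_k(G)$ is the graph whose vertices are all $k$-colourings of $G$, two colourings being adjacent if and only if they differ at exactly one vertex. A vertex $v$ of $G$ is frozen if for every $\chi(G)$-colouring $c$ of $G$, every colour in $\{1,\dots,\chi(G)\}$ appears on the closed neighbourhood of $v$ (so $v$ can never be recoloured); otherwise $v$ is recolourable. *)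

theory Defs
  imports Main
begin

text \<open>A finite simple graph on natural-number vertices: a pair (V, E) with V finite
  and E a symmetric irreflexive relation on V (edges as ordered pairs, both directions).\<close>
type_synonym graph = "nat set \<times> (nat \<times> nat) set"

definition simple_graph :: "graph \<Rightarrow> bool" where
  "simple_graph G \<longleftrightarrow> finite (fst G) \<and> snd G \<subseteq> fst G \<times> fst G \<and> sym (snd G) \<and> irrefl (snd G)"

definition adj :: "graph \<Rightarrow> nat \<Rightarrow> nat \<Rightarrow> bool" where
  "adj G u v \<longleftrightarrow> (u, v) \<in> snd G"

text \<open>Proper k-colourings, as maps V \<rightarrow> {1..k}, extended by 0 outside V so that
  they are uniquely represented.\<close>
definition colourings :: "nat \<Rightarrow> graph \<Rightarrow> (nat \<Rightarrow> nat) set" where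
  "colourings k G = {c. (\<forall>v\<in>fst G. c v \<in> {1..k}) \<and> (\<forall>v. v \<notin> fst G \<longrightarrow> c v = 0)
                         \<and> (\<forall>u v. adj G u v \<longrightarrow> c u \<noteq> c v)}"

definition chromatic_number :: "graph \<Rightarrow> nat" where
  "chromatic_number G = (LEAST k. colourings k G \<noteq> {})"

definition iso :: "'a set \<Rightarrow> ('a \<Rightarrow> 'a \<Rightarrow> bool) \<Rightarrow> 'b set \<Rightarrow> ('b \<Rightarrow> 'b \<Rightarrow> bool) \<Rightarrow> bool" where
  "iso V1 A1 V2 A2 \<longleftrightarrow> (\<exists>f. bij_betw f V1 V2 \<and> (\<forall>x\<in>V1. \<forall>y\<in>V1. A1 x y \<longleftrightarrow> A2 (f x) (f y)))"

definition graph_iso :: "graph \<Rightarrow> graph \<Rightarrow> bool" where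
  "graph_iso G H \<longleftrightarrow> iso (fst G) (adj G) (fst H) (adj H)"

definition recol_adj :: "nat \<Rightarrow> graph \<Rightarrow> (nat \<Rightarrow> nat) \<Rightarrow> (nat \<Rightarrow> nat) \<Rightarrow> bool" where
  "recol_adj k G c d \<longleftrightarrow> card {v \<in> fst G. c v \<noteq> d v} = 1"

definition recol_iso :: "nat \<Rightarrow> graph \<Rightarrow> graph \<Rightarrow> bool" where
  "recol_iso k G H \<longleftrightarrow> iso (colourings k G) (recol_adj k G) (colourings k H) (recol_adj k H)"

definition frozen :: "graph \<Rightarrow> nat \<Rightarrow> bool" where
  "frozen G v \<longleftrightarrow> (\<forall>c \<in> colourings (chromatic_number G) G.
      {1..chromatic_number G} \<subseteq> c ` ({v} \<union> {u. adj G v u}))"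

end

(*
  The complement of an odd cycle C_(2m-1) needs m colours, because each colour class is
  a vertex or an edge of the cycle. Joining the complements of C_5 (part P) and of C_(2k-7)
  (part Q) completely therefore forces k colours, and in every k-colouring P and Q use
  disjoint palettes exhausting {1..k}. A hub vertex complete to Q must then take a P-colour
  and every vertex of a set W complete to P a Q-colour, so edges between the hub and W are
  never monochromatic: adding the first j of them yields graphs with the same k-colourings,
  hence identical recolouring graphs, but with different numbers of edges. No vertex is
  frozen: the complement of an odd cycle has an optimal colouring in which any prescribed
  vertex has a colour of its own, and prescribing a cycle-neighbour of v (a non-neighbour
  in the complement) leaves that colour free for v.
*)
theory Submission
  imports Defs
begin

lemma finite_edges: "simple_graph G \<Longrightarrow> finite (snd G)"
  unfolding simple_graph_def by (auto intro: finite_subset)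

lemma colouringsI:
  assumes "\<And>v. v \<in> fst G \<Longrightarrow> c v \<in> {1..k}" "\<And>v. v \<notin> fst G \<Longrightarrow> c v = 0"
    and "\<And>u v. adj G u v \<Longrightarrow> c u \<noteq> c v"
  shows "c \<in> colourings k G"
  using assms unfolding colourings_def by blast

lemma not_frozenI:
  assumes "c \<in> colourings (chromatic_number G) G" "a \<in> {1..chromatic_number G}"
    and "\<And>u. c u = a \<Longrightarrow> u \<noteq> v \<and> \<not> adj G v u"
  shows "\<not> frozen G v"
proof
  assume "frozen G v"
  with assms(1,2) have "a \<in> c ` ({v} \<union> {u. adj G v u})"
    unfolding frozen_def by blast
  with assms(3) show False by blast
qed

lemma card_edges_eq_if_graph_iso:
  assumes "graph_iso G H" "simple_graph G" "simple_graph H"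
  shows "card (snd G) = card (snd H)"
proof -
  obtain f where f: "bij_betw f (fst G) (fst H)"
    and adj: "\<And>x y. x \<in> fst G \<Longrightarrow> y \<in> fst G \<Longrightarrow> adj G x y \<longleftrightarrow> adj H (f x) (f y)"
    using assms(1) unfolding graph_iso_def iso_def by blast
  have G: "snd G \<subseteq> fst G \<times> fst G" and H: "snd H \<subseteq> fst H \<times> fst H"
    using assms(2,3) unfolding simple_graph_def by auto
  have bij: "bij_betw (map_prod f f) (fst G \<times> fst G) (fst H \<times> fst H)"
    by (rule bij_betw_map_prod[OF f f])
  have "map_prod f f ` snd G = snd H"
  proof (intro equalityI subsetI)
    fix e assume "e \<in> map_prod f f ` snd G"
    with G adj show "e \<in> snd H" by (force simp: adj_def)
  next
    fix e assume e: "e \<in> snd H"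
    with H have "e \<in> f ` fst G \<times> f ` fst G"
      unfolding bij_betw_imp_surj_on[OF f] by blast
    then obtain x y where "x \<in> fst G" "y \<in> fst G" "e = (f x, f y)"
      by blast
    with e adj show "e \<in> map_prod f f ` snd G" by (force simp: adj_def)
  qed
  with bij_betw_subset[OF bij G] show ?thesis
    by (simp add: bij_betw_same_card)
qed

lemma recol_iso_if_colourings_eq:
  assumes "fst G = fst H" "colourings k G = colourings k H"
  shows "recol_iso k G H"
  unfolding recol_iso_def iso_def recol_adj_def using assms by (intro exI[of _ id]) simp

definition cycle_adj :: "nat \<Rightarrow> nat \<Rightarrow> nat \<Rightarrow> bool" where
  "cycle_adj n i j \<longleftrightarrow> j = i + 1 \<or> i = j + 1 \<or> (i = 0 \<and> j = n - 1) \<or> (j = 0 \<and> i = n - 1)"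

definition cocycle_adj :: "nat \<Rightarrow> nat \<Rightarrow> nat \<Rightarrow> bool" where
  "cocycle_adj n i j \<longleftrightarrow> i < n \<and> j < n \<and> i \<noteq> j \<and> \<not> cycle_adj n i j"

lemma cycle_adj_triangle_free:
  assumes "4 \<le> n" "a < n" "b < n" "d < n" "a \<noteq> b" "b \<noteq> d" "a \<noteq> d"
    and "cycle_adj n a b" "cycle_adj n b d" "cycle_adj n a d"
  shows False
  using assms unfolding cycle_adj_def by arith

lemma cycle_adj_succ_mod:
  assumes "2 \<le> n" "i < n"
  shows "cycle_adj n i ((i + 1) mod n) \<and> (i + 1) mod n \<noteq> i \<and> (i + 1) mod n < n"
proof (cases "i + 1 < n")
  case True
  then show ?thesis by (simp add: cycle_adj_def)
next
  case False
  with assms have "i + 1 = n" by simp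
  with assms show ?thesis by (auto simp: cycle_adj_def)
qed

lemma card_image_ge_of_cocycle_colouring:
  fixes c :: "nat \<Rightarrow> 'a"
  assumes "4 \<le> n" and proper: "\<And>i j. cocycle_adj n i j \<Longrightarrow> c i \<noteq> c j"
  shows "n \<le> 2 * card (c ` {..<n})"
proof -
  let ?class = "\<lambda>a. {i \<in> {..<n}. c i = a}"
  have "card (?class a) \<le> 2" for a
  proof (rule ccontr)
    assume "\<not> card (?class a) \<le> 2"
    then obtain T where "T \<subseteq> ?class a" "card T = 3"
      using obtain_subset_with_card_n[of 3 "?class a"] by force
    then obtain x y z where xyz: "x \<in> ?class a" "y \<in> ?class a" "z \<in> ?class a"
      "x \<noteq> y" "y \<noteq> z" "x \<noteq> z"
      unfolding card_3_iff by auto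
    have "cycle_adj n i i'" if "i \<in> ?class a" "i' \<in> ?class a" "i \<noteq> i'" for i i'
      using proper[of i i'] that unfolding cocycle_adj_def by auto
    with xyz show False
      using cycle_adj_triangle_free[OF \<open>4 \<le> n\<close>, of x y z] by auto
  qed
  moreover have "{..<n} = (\<Union>a\<in>c ` {..<n}. ?class a)" by auto
  then have "n \<le> (\<Sum>a\<in>c ` {..<n}. card (?class a))"
    using card_UN_le[of "c ` {..<n}" ?class] by simp
  ultimately show ?thesis
    using sum_mono[of "c ` {..<n}" "\<lambda>a. card (?class a)" "\<lambda>_. 2"] by simp
qed

text \<open>The vertex \<open>s\<close> gets colour \<open>m\<close>; the following vertices, counted cyclically from
  \<open>s + 1\<close>, are paired into cycle edges coloured \<open>1, \<dots>, m - 1\<close>.\<close>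

definition cocycle_colour :: "nat \<Rightarrow> nat \<Rightarrow> nat \<Rightarrow> nat" where
  "cocycle_colour m s i =
     (if i = s then m else ((if s \<le> i then i - s else i + (2 * m - 1) - s) + 1) div 2)"

lemma cocycle_colour_range:
  assumes "2 \<le> m" "s < 2 * m - 1" "i < 2 * m - 1"
  shows "1 \<le> cocycle_colour m s i \<and> cocycle_colour m s i \<le> m
    \<and> (cocycle_colour m s i = m \<longleftrightarrow> i = s)"
  using assms unfolding cocycle_colour_def by (auto; presburger)

lemma cocycle_colour_proper:
  assumes "2 \<le> m" "s < 2 * m - 1" "cocycle_adj (2 * m - 1) i j"
  shows "cocycle_colour m s i \<noteq> cocycle_colour m s j"
proof
  assume same: "cocycle_colour m s i = cocycle_colour m s j"
  have "i < 2 * m - 1" "j < 2 * m - 1" "i \<noteq> j"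
    using assms(3) unfolding cocycle_adj_def by auto
  with same have "i \<noteq> s" "j \<noteq> s"
    using cocycle_colour_range[OF assms(1,2)] by metis+
  with assms same show False
    unfolding cocycle_colour_def cocycle_adj_def cycle_adj_def by (auto split: if_splits; presburger)
qed

definition Q_order :: "nat \<Rightarrow> nat" where
  "Q_order k = 2 * (k - 3) - 1"

definition hub :: "nat \<Rightarrow> nat" where
  "hub k = 5 + Q_order k"

text \<open>The vertex set is \<open>{..hub k + N}\<close>: P = \<open>{..<5}\<close> spans the complement of \<open>C\<^sub>5\<close>,
  Q = \<open>{5..<hub k}\<close> the complement of \<open>C\<^bsub>2k-7\<^esub>\<close>, and W = \<open>{hub k<..hub k + N}\<close>.\<close>

definition arc :: "nat \<Rightarrow> nat \<Rightarrow> nat \<Rightarrow> nat \<Rightarrow> nat \<Rightarrow> bool" where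
  "arc k N j x y \<longleftrightarrow>
       cocycle_adj 5 x y
     \<or> 5 \<le> x \<and> 5 \<le> y \<and> cocycle_adj (Q_order k) (x - 5) (y - 5)
     \<or> x < 5 \<and> y \<in> {5..<hub k}
     \<or> x = hub k \<and> y \<in> {5..<hub k}
     \<or> x \<in> {hub k<..hub k + N} \<and> y < 5
     \<or> x = hub k \<and> y \<in> {hub k<..hub k + j}"

definition family_graph :: "nat \<Rightarrow> nat \<Rightarrow> nat \<Rightarrow> graph" where
  "family_graph k N j = ({..hub k + N}, {(x, y). arc k N j x y \<or> arc k N j y x})"

lemma fst_family_graph [simp]: "fst (family_graph k N j) = {..hub k + N}"
  by (simp add: family_graph_def)

lemma adj_family_graph: "adj (family_graph k N j) x y \<longleftrightarrow> arc k N j x y \<or> arc k N j y x"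
  by (simp add: adj_def family_graph_def)

lemma arc_mono: "j \<le> j' \<Longrightarrow> arc k N j x y \<Longrightarrow> arc k N j' x y"
  unfolding arc_def by auto

lemma arc_irrefl: "\<not> arc k N j x x"
  unfolding arc_def cocycle_adj_def hub_def by auto

lemma arc_le_hub_plus: "j \<le> N \<Longrightarrow> arc k N j x y \<Longrightarrow> x \<le> hub k + N \<and> y \<le> hub k + N"
  unfolding arc_def cocycle_adj_def hub_def by auto

lemma arc_P: "cocycle_adj 5 x y \<Longrightarrow> arc k N j x y"
  and arc_Q: "cocycle_adj (Q_order k) i i' \<Longrightarrow> arc k N j (5 + i) (5 + i')"
  and arc_P_Q: "x < 5 \<Longrightarrow> y \<in> {5..<hub k} \<Longrightarrow> arc k N j x y"
  and arc_hub_Q: "y \<in> {5..<hub k} \<Longrightarrow> arc k N j (hub k) y"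
  and arc_W_P: "x \<in> {hub k<..hub k + N} \<Longrightarrow> y < 5 \<Longrightarrow> arc k N j x y"
  unfolding arc_def by simp_all

lemma family_vertex_cases:
  obtains (P) "x < 5" | (Q) "x \<in> {5..<hub k}" | (hub) "x = hub k"
    | (W) "x \<in> {hub k<..hub k + N}" | (outside) "hub k + N < x"
  by (metis atLeastLessThan_iff greaterThanAtMost_iff linorder_neqE_nat not_le)

lemma simple_family_graph: "j \<le> N \<Longrightarrow> simple_graph (family_graph k N j)"
  unfolding simple_graph_def family_graph_def sym_def irrefl_def
  using arc_le_hub_plus arc_irrefl by auto

lemma colourings_family_graph_antimono:
  "j \<le> j' \<Longrightarrow> colourings m (family_graph k N j') \<subseteq> colourings m (family_graph k N j)"
  unfolding colourings_def adj_family_graph using arc_mono by auto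

lemma colourings_family_graphI:
  assumes "\<And>x. x \<le> hub k + N \<Longrightarrow> c x \<in> {1..m}" "\<And>x. hub k + N < x \<Longrightarrow> c x = 0"
    and "\<And>x y. arc k N j x y \<Longrightarrow> c x \<noteq> c y"
  shows "c \<in> colourings m (family_graph k N j)"
proof (rule colouringsI)
  fix x y assume "adj (family_graph k N j) x y"
  then show "c x \<noteq> c y"
    unfolding adj_family_graph by (metis assms(3))
qed (use assms(1,2) in auto)

lemma Q_order_ge: "6 \<le> k \<Longrightarrow> 5 \<le> Q_order k"
  unfolding Q_order_def by simp

context
  fixes k N j m :: nat and c :: "nat \<Rightarrow> nat"
  assumes k: "6 \<le> k" and c: "c \<in> colourings m (family_graph k N j)"
begin

lemma colour_neq_if_arc: "arc k N j x y \<Longrightarrow> c x \<noteq> c y"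
  using c unfolding colourings_def adj_family_graph by auto

lemma colour_range: "x \<le> hub k + N \<Longrightarrow> c x \<in> {1..m}"
  and colour_outside: "hub k + N < x \<Longrightarrow> c x = 0"
  using c unfolding colourings_def by auto

lemma card_colours_P: "3 \<le> card (c ` {..<5})"
  using card_image_ge_of_cocycle_colouring[of 5 c] colour_neq_if_arc arc_P by fastforce

lemma card_colours_Q: "k - 3 \<le> card (c ` {5..<hub k})"
proof -
  have "Q_order k \<le> 2 * card ((\<lambda>i. c (5 + i)) ` {..<Q_order k})"
    using Q_order_ge[OF k] colour_neq_if_arc arc_Q by (intro card_image_ge_of_cocycle_colouring) auto
  moreover have "{5..<hub k} = (\<lambda>i. 5 + i) ` {..<Q_order k}"
    unfolding hub_def by (simp add: lessThan_atLeast0 add.commute)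
  ultimately show ?thesis
    using k unfolding Q_order_def by (simp add: image_image)
qed

lemma colours_P_Q_disjoint: "c ` {..<5} \<inter> c ` {5..<hub k} = {}"
  using colour_neq_if_arc arc_P_Q by blast

lemma card_colours_P_Q: "k \<le> card (c ` {..<5} \<union> c ` {5..<hub k})"
  using card_colours_P card_colours_Q colours_P_Q_disjoint k by (simp add: card_Un_disjoint)

lemma colours_P_Q_subset: "c ` {..<5} \<union> c ` {5..<hub k} \<subseteq> {1..m}"
  using colour_range by (auto simp: hub_def)

lemma chromatic_lower_bound: "k \<le> m"
  using card_colours_P_Q card_mono[OF _ colours_P_Q_subset] by simp

lemma colours_P_Q_cover: "m = k \<Longrightarrow> c ` {..<5} \<union> c ` {5..<hub k} = {1..m}"
  using card_colours_P_Q card_mono[OF _ colours_P_Q_subset] colours_P_Q_subset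
  by (intro card_subset_eq) auto

lemma colour_hub_neq_W:
  assumes "m = k" "w \<in> {hub k<..hub k + N}"
  shows "c (hub k) \<noteq> c w"
proof -
  have "c (hub k) \<in> c ` {..<5} \<union> c ` {5..<hub k}" "c w \<in> c ` {..<5} \<union> c ` {5..<hub k}"
    using colours_P_Q_cover[OF assms(1)] colour_range assms(2) by auto
  moreover have "c (hub k) \<notin> c ` {5..<hub k}" "c w \<notin> c ` {..<5}"
    using colour_neq_if_arc arc_hub_Q arc_W_P[OF assms(2)] by blast+
  ultimately have "c (hub k) \<in> c ` {..<5}" "c w \<in> c ` {5..<hub k}"
    by simp_all
  then show ?thesis
    using colours_P_Q_disjoint by (metis disjoint_iff)
qed

end

lemma colourings_family_graph_eq:
  assumes "6 \<le> k" "j \<le> N"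
  shows "colourings k (family_graph k N j) = colourings k (family_graph k N 0)"
proof
  show "colourings k (family_graph k N j) \<subseteq> colourings k (family_graph k N 0)"
    by (rule colourings_family_graph_antimono) simp
  show "colourings k (family_graph k N 0) \<subseteq> colourings k (family_graph k N j)"
  proof
    fix c assume c: "c \<in> colourings k (family_graph k N 0)"
    show "c \<in> colourings k (family_graph k N j)"
    proof (rule colourings_family_graphI)
      fix x y assume "arc k N j x y"
      then consider "arc k N 0 x y" | "x = hub k" "y \<in> {hub k<..hub k + N}"
        using assms(2) unfolding arc_def by auto
      then show "c x \<noteq> c y"
        by cases (use colour_neq_if_arc[OF assms(1) c] colour_hub_neq_W[OF assms(1) c] in auto)
    qed (use colour_range[OF assms(1) c] colour_outside[OF assms(1) c] in auto)
  qed
qed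

definition standard_colouring :: "nat \<Rightarrow> nat \<Rightarrow> nat \<Rightarrow> nat \<Rightarrow> nat \<Rightarrow> nat" where
  "standard_colouring k N s t x =
     (if x < 5 then cocycle_colour 3 s x
      else if x < hub k then 3 + cocycle_colour (k - 3) t (x - 5)
      else if x = hub k then 1
      else if x \<le> hub k + N then 4
      else 0)"

context
  fixes k N s t :: nat
  assumes k: "6 \<le> k" and s: "s < 5" and t: "t < Q_order k"
begin

lemma standard_colouring_P:
  "x < 5 \<Longrightarrow> 1 \<le> standard_colouring k N s t x \<and> standard_colouring k N s t x \<le> 3
    \<and> (standard_colouring k N s t x = 3 \<longleftrightarrow> x = s)"
  using cocycle_colour_range[of 3 s x] s by (simp add: standard_colouring_def)

lemma standard_colouring_Q:
  assumes "x \<in> {5..<hub k}"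
  shows "4 \<le> standard_colouring k N s t x \<and> standard_colouring k N s t x \<le> k
    \<and> (standard_colouring k N s t x = k \<longleftrightarrow> x = 5 + t)"
proof -
  have "1 \<le> cocycle_colour (k - 3) t (x - 5) \<and> cocycle_colour (k - 3) t (x - 5) \<le> k - 3
      \<and> (cocycle_colour (k - 3) t (x - 5) = k - 3 \<longleftrightarrow> x - 5 = t)"
    using assms k t by (intro cocycle_colour_range) (auto simp: Q_order_def hub_def)
  moreover have "standard_colouring k N s t x = 3 + cocycle_colour (k - 3) t (x - 5)"
    using assms by (simp add: standard_colouring_def)
  ultimately show ?thesis
    using assms k by (auto; linarith)
qed

lemma standard_colouring_hub: "standard_colouring k N s t (hub k) = 1"
  and standard_colouring_W: "x \<in> {hub k<..hub k + N} \<Longrightarrow> standard_colouring k N s t x = 4"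
  and standard_colouring_outside: "hub k + N < x \<Longrightarrow> standard_colouring k N s t x = 0"
  by (simp_all add: standard_colouring_def hub_def)

lemma standard_colouring_proper:
  assumes "arc k N j x y"
  shows "standard_colouring k N s t x \<noteq> standard_colouring k N s t y"
  using assms unfolding arc_def
proof (elim disjE conjE)
  assume "cocycle_adj 5 x y"
  then show ?thesis
    using cocycle_colour_proper[of 3 s x y] s by (simp add: standard_colouring_def cocycle_adj_def)
next
  assume xy: "5 \<le> x" "5 \<le> y" "cocycle_adj (Q_order k) (x - 5) (y - 5)"
  then have "x < hub k" "y < hub k"
    by (auto simp: cocycle_adj_def hub_def)
  moreover have "cocycle_colour (k - 3) t (x - 5) \<noteq> cocycle_colour (k - 3) t (y - 5)"
    using xy k t by (intro cocycle_colour_proper) (auto simp: Q_order_def)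
  ultimately show ?thesis
    using xy by (simp add: standard_colouring_def)
next
  assume "x < 5" "y \<in> {5..<hub k}"
  then show ?thesis using standard_colouring_P[of x] standard_colouring_Q[of y] by auto
next
  assume "x = hub k" "y \<in> {5..<hub k}"
  then show ?thesis using standard_colouring_hub standard_colouring_Q[of y] by auto
next
  assume "x \<in> {hub k<..hub k + N}" "y < 5"
  then show ?thesis using standard_colouring_W[of x] standard_colouring_P[of y] by auto
next
  assume "x = hub k" "y \<in> {hub k<..hub k + j}"
  then show ?thesis
    using standard_colouring_hub standard_colouring_W[of y] standard_colouring_outside[of y]
    by (cases "y \<le> hub k + N") auto
qed

lemma standard_colouring_in_colourings:
  "standard_colouring k N s t \<in> colourings k (family_graph k N j)"
proof (rule colourings_family_graphI)
  fix x assume "x \<le> hub k + N"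
  then show "standard_colouring k N s t x \<in> {1..k}"
    using standard_colouring_P[of x] standard_colouring_Q[of x] standard_colouring_hub
      standard_colouring_W[of x] k
    by (cases rule: family_vertex_cases[where x = x and k = k and N = N]) auto
qed (simp_all add: standard_colouring_outside standard_colouring_proper)

lemma standard_colouring_classes:
  fixes x :: nat
  defines "a \<equiv> standard_colouring k N s t x"
  shows "a = 2 \<Longrightarrow> x < 5" and "a = 3 \<Longrightarrow> x = s"
    and "a = 5 \<Longrightarrow> x \<in> {5..<hub k}" and "a = k \<Longrightarrow> x = 5 + t"
  using standard_colouring_P[of x] standard_colouring_Q[of x] standard_colouring_hub
    standard_colouring_W[of x] standard_colouring_outside[of x] k
  unfolding a_def by (cases rule: family_vertex_cases[where x = x and k = k and N = N]; simp)+

end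

lemma chromatic_number_family_graph:
  assumes "6 \<le> k"
  shows "chromatic_number (family_graph k N j) = k"
  unfolding chromatic_number_def
proof (rule Least_equality)
  show "colourings k (family_graph k N j) \<noteq> {}"
    using standard_colouring_in_colourings[OF assms, of 0 0] Q_order_ge[OF assms] by auto
  show "k \<le> m" if "colourings m (family_graph k N j) \<noteq> {}" for m
    using that chromatic_lower_bound[OF assms] by blast
qed

lemma adj_family_graph_P: "v < 5 \<Longrightarrow> u < 5 \<Longrightarrow> adj (family_graph k N j) v u \<longleftrightarrow> cocycle_adj 5 v u"
  and adj_family_graph_Q: "v \<in> {5..<hub k} \<Longrightarrow> u \<in> {5..<hub k} \<Longrightarrow>
    adj (family_graph k N j) v u \<longleftrightarrow> cocycle_adj (Q_order k) (v - 5) (u - 5)"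
  and not_adj_family_graph_hub_P: "u < 5 \<Longrightarrow> \<not> adj (family_graph k N j) (hub k) u"
  and not_adj_family_graph_W_Q: "v \<in> {hub k<..hub k + N} \<Longrightarrow> u \<in> {5..<hub k} \<Longrightarrow>
    \<not> adj (family_graph k N j) v u"
  unfolding adj_family_graph arc_def by (auto simp: hub_def cocycle_adj_def cycle_adj_def)

lemma not_frozen_family_graphI:
  assumes k: "6 \<le> k" and "s < 5" "t < Q_order k" "a \<in> {1..k}"
    and "\<And>u. standard_colouring k N s t u = a \<Longrightarrow> u \<noteq> v \<and> \<not> adj (family_graph k N j) v u"
  shows "\<not> frozen (family_graph k N j) v"
  using assms standard_colouring_in_colourings[OF k assms(2,3)]
  by (intro not_frozenI) (auto simp: chromatic_number_family_graph[OF k])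

lemma not_frozen_family_graph_P:
  assumes k: "6 \<le> k" and v: "v < 5"
  shows "\<not> frozen (family_graph k N j) v"
proof -
  let ?s = "(v + 1) mod 5"
  have s: "?s < 5" "?s \<noteq> v" "\<not> adj (family_graph k N j) v ?s"
    using cycle_adj_succ_mod[of 5 v] v adj_family_graph_P[OF v, of ?s] by (auto simp: cocycle_adj_def)
  have Q_pos: "0 < Q_order k" using Q_order_ge[OF k] by simp
  show ?thesis
  proof (rule not_frozen_family_graphI[OF k s(1) Q_pos, of 3])
    fix u assume "standard_colouring k N ?s 0 u = 3"
    then have "u = ?s" by (rule standard_colouring_classes(2)[OF k s(1) Q_pos])
    with s show "u \<noteq> v \<and> \<not> adj (family_graph k N j) v u" by simp
  qed (use k in simp)
qed

lemma not_frozen_family_graph_Q: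
  assumes k: "6 \<le> k" and v: "v \<in> {5..<hub k}"
  shows "\<not> frozen (family_graph k N j) v"
proof -
  obtain i where i: "i < Q_order k" "v = 5 + i"
    using v by (metis add_diff_inverse_nat atLeastLessThan_iff hub_def add_less_cancel_left not_le)
  let ?t = "(i + 1) mod Q_order k"
  have "cycle_adj (Q_order k) i ?t" "?t \<noteq> i" "?t < Q_order k"
    using cycle_adj_succ_mod[OF _ i(1)] Q_order_ge[OF k] by auto
  then have t: "?t < Q_order k" "5 + ?t \<noteq> v" "\<not> adj (family_graph k N j) v (5 + ?t)"
    using adj_family_graph_Q[OF v, of "5 + ?t"] i by (auto simp: cocycle_adj_def hub_def)
  show ?thesis
  proof (rule not_frozen_family_graphI[OF k zero_less_numeral t(1), of k])
    fix u assume "standard_colouring k N 0 ?t u = k"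
    then have "u = 5 + ?t" by (rule standard_colouring_classes(4)[OF k zero_less_numeral t(1)])
    with t show "u \<noteq> v \<and> \<not> adj (family_graph k N j) v u" by simp
  qed (use k in simp)
qed

lemma not_frozen_family_graph:
  assumes k: "6 \<le> k" and v: "v \<le> hub k + N"
  shows "\<not> frozen (family_graph k N j) v"
proof -
  have Q_pos: "0 < Q_order k" using Q_order_ge[OF k] by simp
  show ?thesis
  proof (cases rule: family_vertex_cases[where x = v and k = k and N = N])
    case hub
    show ?thesis
    proof (rule not_frozen_family_graphI[OF k zero_less_numeral Q_pos, of 2])
      fix u assume "standard_colouring k N 0 0 u = 2"
      then have "u < 5" by (rule standard_colouring_classes(1)[OF k zero_less_numeral Q_pos])
      with hub show "u \<noteq> v \<and> \<not> adj (family_graph k N j) v u"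
        using not_adj_family_graph_hub_P by (auto simp: hub_def)
    qed (use k in simp)
  next
    case W
    show ?thesis
    proof (rule not_frozen_family_graphI[OF k zero_less_numeral Q_pos, of 5])
      fix u assume "standard_colouring k N 0 0 u = 5"
      then have "u \<in> {5..<hub k}" by (rule standard_colouring_classes(3)[OF k zero_less_numeral Q_pos])
      with W show "u \<noteq> v \<and> \<not> adj (family_graph k N j) v u"
        using not_adj_family_graph_W_Q by auto
    qed (use k in simp)
  qed (use k v not_frozen_family_graph_P not_frozen_family_graph_Q in auto)
qed

lemma card_edges_family_graph_less:
  assumes "j < j'" "j' \<le> N"
  shows "card (snd (family_graph k N j)) < card (snd (family_graph k N j'))"
proof (rule psubset_card_mono)
  show "finite (snd (family_graph k N j'))"
    using simple_family_graph[OF assms(2)] by (rule finite_edges)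
  have "snd (family_graph k N j) \<subseteq> snd (family_graph k N j')"
    using arc_mono[of j j'] assms(1) by (auto simp: family_graph_def)
  moreover have "(hub k, hub k + j') \<in> snd (family_graph k N j') - snd (family_graph k N j)"
    using assms(1) by (auto simp: family_graph_def arc_def cocycle_adj_def hub_def)
  ultimately show "snd (family_graph k N j) \<subset> snd (family_graph k N j')"
    by blast
qed

theorem theorem1p4:
  fixes \<chi> N :: nat
  assumes "\<chi> \<ge> 6" and "N \<ge> 1"
  shows "\<exists>\<F> :: graph set. finite \<F> \<and> card \<F> \<ge> N
     \<and> (\<forall>G\<in>\<F>. simple_graph G \<and> chromatic_number G = \<chi> \<and> (\<forall>v\<in>fst G. \<not> frozen G v))
     \<and> (\<forall>G\<in>\<F>. \<forall>G'\<in>\<F>. G \<noteq> G' \<longrightarrow> \<not> graph_iso G G')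
     \<and> (\<forall>G\<in>\<F>. \<forall>G'\<in>\<F>. recol_iso \<chi> G G')"
proof -
  let ?G = "family_graph \<chi> N"
  have edges_inj: "inj_on (\<lambda>j. card (snd (?G j))) {..<N}"
    using card_edges_family_graph_less
    by (intro strict_mono_on_imp_inj_on) (auto simp: strict_mono_on_def)
  then have "inj_on ?G {..<N}"
    by (rule inj_on_imageI2[of "\<lambda>G. card (snd G)", unfolded comp_def])
  then have "card (?G ` {..<N}) = N"
    by (simp add: card_image)
  moreover have "simple_graph (?G j) \<and> chromatic_number (?G j) = \<chi> \<and> (\<forall>v\<in>fst (?G j). \<not> frozen (?G j) v)"
    if "j < N" for j
    using that simple_family_graph chromatic_number_family_graph[OF assms(1)]
      not_frozen_family_graph[OF assms(1)] by simp
  moreover have "\<not> graph_iso (?G j) (?G j')" if "j < N" "j' < N" "?G j \<noteq> ?G j'" for j j'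
    using edges_inj that card_edges_eq_if_graph_iso simple_family_graph
    by (metis inj_on_contraD lessThan_iff less_imp_le)
  moreover have "recol_iso \<chi> (?G j) (?G j')" if "j < N" "j' < N" for j j'
    using that colourings_family_graph_eq[OF assms(1)] recol_iso_if_colourings_eq
    by (metis fst_family_graph less_imp_le)
  ultimately show ?thesis
    by (intro exI[of _ "?G ` {..<N}"]) auto
qed

end
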